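(* Let $G_m$ be a bounded Vilenkin group and let $\varphi:P_+\to[1,\infty)$ be a nondecreasing function with $\limsup_{n\to\infty}\frac{\log^2(n+1)}{\varphi(n)}=+\infty$. Then the maximal operator $f\mapsto \sup_{n\in P_+}\frac{|\sigma_nf|}{\varphi(n)}$ is not bounded from $H_{1/2}(G_m)$ to $L_{1/2}(G_m)$; i.e., there is no constant $c<\infty$ such that $\big\|\sup_{n\in P_+}\frac{|\sigma_nf|}{\varphi(n)}\big\|_{L_{1/2}}\le c\|f\|_{H_{1/2}}$ for all martingales $f\in H_{1/2}(G_m)$.
   Context: Let $P_+$ be the positive integers and $P=P_+\cup\{0\}$. Let $m=(m_0,m_1,\dots)$ be a sequence of integers $m_k\ge 2$ with $\sup_k m_k<\infty$. $G_m$ is the complete direct product of the cyclic groups $Z_{m_k}$, with Haar measure $\mu$ = product of the uniform probability measures on $Z_{m_k}$. Put $M_0=1$, $M_{k+1}=m_kM_k$. For $x\in G_m$, $I_n(x)=\{y: y_j=x_j,\ 0\le j<n\}$. Every $n\in P$ is written uniquely as $n=\sum_j n_jM_j$, $n_j\in Z_{m_j}$. Rademacher functions $r_k(x)=\exp(2\pi i x_k/m_k)$; Vilenkin system $\psi_n=\prod_k r_k^{n_k}$. $\mathcal F_n$ is the $\sigma$-algebra generated by the sets $I_n(x)$. For a martingale $f=(f^{(n)})$ w.r.t. $(\mathcal F_n)$, $f^*=\sup_n|f^{(n)}|$; $H_p(G_m)$ consists of martingales with $\|f\|_{H_p}:=\|f^*\|_{L_p}<\infty$, $\|g\|_{L_p}=(\int|g|^pd\mu)^{1/p}$.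 $\hat f(i)=\lim_{k}\int f^{(k)}\overline{\psi_i}\,d\mu$, $S_nf=\sum_{k=0}^{n-1}\hat f(k)\psi_k$, $\sigma_nf=\frac1n\sum_{k=0}^{n-1}S_kf$. $\log$ denotes a fixed logarithm. *)

theory Defs
  imports "HOL-Probability.Probability"
begin

text \<open>Vilenkin group G_m, represented as sequences x :: nat => nat with x k < m k,
  equipped with the product of the uniform probability measures on Z_{m_k}.\<close>

definition vilenkin_measure :: "(nat \<Rightarrow> nat) \<Rightarrow> (nat \<Rightarrow> nat) measure" where
  "vilenkin_measure m = (\<Pi>\<^sub>M k\<in>(UNIV::nat set). uniform_count_measure {..<m k})"

definition vM :: "(nat \<Rightarrow> nat) \<Rightarrow> nat \<Rightarrow> nat" where
  "vM m k = (\<Prod>j<k. m j)"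

definition vdigit :: "(nat \<Rightarrow> nat) \<Rightarrow> nat \<Rightarrow> nat \<Rightarrow> nat" where
  "vdigit m n k = (n div vM m k) mod m k"

definition rademacher :: "(nat \<Rightarrow> nat) \<Rightarrow> nat \<Rightarrow> (nat \<Rightarrow> nat) \<Rightarrow> complex" where
  "rademacher m k x = cis (2 * pi * real (x k) / real (m k))"

text \<open>Vilenkin functions psi_n = prod_k r_k^{n_k}; only finitely many digits are nonzero
  (all with k <= n, since M_k >= 2^k), so the product is over k <= n.\<close>
definition vpsi :: "(nat \<Rightarrow> nat) \<Rightarrow> nat \<Rightarrow> (nat \<Rightarrow> nat) \<Rightarrow> complex" where
  "vpsi m n x = (\<Prod>k\<le>n. rademacher m k x ^ vdigit m n k)"

text \<open>A function is F_n-measurable iff it is constant on each atom I_n(x) of F_n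
  (F_n is generated by the finitely many sets I_n(x)).\<close>
definition Fn_measurable :: "(nat \<Rightarrow> nat) \<Rightarrow> nat \<Rightarrow> ((nat \<Rightarrow> nat) \<Rightarrow> complex) \<Rightarrow> bool" where
  "Fn_measurable m n g \<longleftrightarrow>
     (\<forall>x\<in>space (vilenkin_measure m). \<forall>y\<in>space (vilenkin_measure m).
        (\<forall>j<n. y j = x j) \<longrightarrow> g y = g x)"

text \<open>Martingales w.r.t. (F_n): f^(n) is F_n-measurable and E(f^(n+1) | F_n) = f^(n);
  the conditional expectation onto F_n of an F_{n+1}-measurable function is the average
  over the n-th coordinate.\<close>
definition vmartingale :: "(nat \<Rightarrow> nat) \<Rightarrow> (nat \<Rightarrow> (nat \<Rightarrow> nat) \<Rightarrow> complex) \<Rightarrow> bool" where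
  "vmartingale m f \<longleftrightarrow>
     (\<forall>n. Fn_measurable m n (f n)) \<and>
     (\<forall>n. \<forall>x\<in>space (vilenkin_measure m).
        f n x = (\<Sum>j<m n. f (Suc n) (x(n := j))) / of_nat (m n))"

definition mart_max :: "(nat \<Rightarrow> (nat \<Rightarrow> nat) \<Rightarrow> complex) \<Rightarrow> (nat \<Rightarrow> nat) \<Rightarrow> ennreal" where
  "mart_max f x = (SUP n. ennreal (cmod (f n x)))"

definition Lp_qnorm :: "'a measure \<Rightarrow> real \<Rightarrow> ('a \<Rightarrow> ennreal) \<Rightarrow> ennreal" where
  "Lp_qnorm M p g =
     (let I = (\<integral>\<^sup>+ x. (if g x = \<top> then \<top> else ennreal (enn2real (g x) powr p)) \<partial>M)
      in if I = \<top> then \<top> else ennreal (enn2real I powr (1 / p)))"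

definition Hp_norm :: "(nat \<Rightarrow> nat) \<Rightarrow> real \<Rightarrow> (nat \<Rightarrow> (nat \<Rightarrow> nat) \<Rightarrow> complex) \<Rightarrow> ennreal" where
  "Hp_norm m p f = Lp_qnorm (vilenkin_measure m) p (mart_max f)"

definition vfourier :: "(nat \<Rightarrow> nat) \<Rightarrow> (nat \<Rightarrow> (nat \<Rightarrow> nat) \<Rightarrow> complex) \<Rightarrow> nat \<Rightarrow> complex" where
  "vfourier m f i = lim (\<lambda>k. \<integral>x. f k x * cnj (vpsi m i x) \<partial>vilenkin_measure m)"

definition vpartial_sum :: "(nat \<Rightarrow> nat) \<Rightarrow> (nat \<Rightarrow> (nat \<Rightarrow> nat) \<Rightarrow> complex) \<Rightarrow> nat \<Rightarrow> (nat \<Rightarrow> nat) \<Rightarrow> complex" where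
  "vpartial_sum m f n x = (\<Sum>k<n. vfourier m f k * vpsi m k x)"

definition vfejer :: "(nat \<Rightarrow> nat) \<Rightarrow> (nat \<Rightarrow> (nat \<Rightarrow> nat) \<Rightarrow> complex) \<Rightarrow> nat \<Rightarrow> (nat \<Rightarrow> nat) \<Rightarrow> complex" where
  "vfejer m f n x = (\<Sum>k<n. vpartial_sum m f k x) / of_nat n"

end

theory Submission
  imports Defs
begin

(* The proof tests the operator on the martingales f_N = D_{M_{N+1}} - D_{M_N}, where
   D_{M_n} = M_n 1_{I_n} and I_n = I_n(0).  Their Fourier coefficients are 1 on [M_N, M_{N+1})
   and 0 below M_N, and f_N^* \<le> M_{N+1} 1_{I_N}, so \<parallel>f_N\<parallel>_{H_{1/2}} \<le> M_{N+1}/M_N^2.  On the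
   annulus I_t - I_{t+1} (t < N) the Fejer mean of index M_N + M_{t+1} has an explicit closed
   form (a geometric sum of roots of unity) of modulus \<ge> M_t M_{t+1} / (2 (M_N + M_{t+1})).
   Integrating the square root over the N annuli gives the lower bound
   N^2 / (4 B M_N \<phi>(2 M_N)) for the L_{1/2} quasi-norm, B a bound for the m_k.  Hence a
   bounded operator would force N^2 \<le> 4 c B^2 \<phi>(2 M_N) for all N \<ge> 1, whereas the limsup
   hypothesis together with log(n+1) = O(N) for 2 M_N \<le> n < 2 M_{N+1} yields N with
   N^2 arbitrarily larger than \<phi>(2 M_N). *)

section \<open>The Haar measure and the sets I_n\<close>

lemma product_prob_space_vilenkin:
  fixes m :: "nat \<Rightarrow> nat"
  assumes "\<And>k. m k > 0"
  shows "product_prob_space (\<lambda>k. uniform_count_measure {..<m k})"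
proof -
  have "\<And>k. prob_space (uniform_count_measure {..<m k})"
    using assms by (intro prob_space_uniform_count_measure) auto
  then show ?thesis
    unfolding product_prob_space_def product_prob_space_axioms_def product_sigma_finite_def
    using prob_space_imp_sigma_finite by blast
qed

lemma prob_space_vilenkin:
  assumes "\<And>k. m k > 0"
  shows "prob_space (vilenkin_measure m)"
proof -
  interpret product_prob_space "\<lambda>k. uniform_count_measure {..<m k}" UNIV
    using product_prob_space_vilenkin[OF assms] .
  show ?thesis unfolding vilenkin_measure_def by (rule prob_space_axioms)
qed

lemma space_vilenkin: "space (vilenkin_measure m) = {x. \<forall>k. x k < m k}"
  by (auto simp: vilenkin_measure_def space_PiM space_uniform_count_measure PiE_def Pi_def
      extensional_def)

definition vI :: "(nat \<Rightarrow> nat) \<Rightarrow> nat \<Rightarrow> (nat \<Rightarrow> nat) \<Rightarrow> (nat \<Rightarrow> nat) set" where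
  "vI m n a = {x \<in> space (vilenkin_measure m). \<forall>j<n. x j = a j}"

lemma vI_prod_emb:
  "vI m n a = prod_emb UNIV (\<lambda>k. uniform_count_measure {..<m k}) {..<n} (PiE {..<n} (\<lambda>j. {a j}))"
  by (auto simp: vI_def prod_emb_def vilenkin_measure_def space_PiM PiE_iff restrict_def
      extensional_def fun_eq_iff space_uniform_count_measure Pi_iff)

lemma sets_vI [measurable]:
  assumes "\<And>j. j < n \<Longrightarrow> a j < m j"
  shows "vI m n a \<in> sets (vilenkin_measure m)"
  unfolding vI_prod_emb vilenkin_measure_def
  by (rule sets_PiM_I) (auto simp: sets_uniform_count_measure assms)

lemma emeasure_vI:
  assumes m: "\<And>k. m k > 0" and a: "\<And>j. j < n \<Longrightarrow> a j < m j"
  shows "emeasure (vilenkin_measure m) (vI m n a) = ennreal (1 / real (vM m n))"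
proof -
  interpret P: product_prob_space "\<lambda>k. uniform_count_measure {..<m k}" UNIV
    using product_prob_space_vilenkin[OF m] .
  have "emeasure (vilenkin_measure m) (vI m n a) =
        (\<Prod>j<n. emeasure (uniform_count_measure {..<m j}) {a j})"
    unfolding vI_prod_emb vilenkin_measure_def
    by (rule P.emeasure_PiM_emb) (auto simp: sets_uniform_count_measure a)
  also have "\<dots> = (\<Prod>j<n. ennreal (1 / real (m j)))"
    using a by (intro prod.cong refl)
      (auto simp: emeasure_uniform_count_measure ennreal_of_nat_eq_real_of_nat divide_ennreal m)
  also have "\<dots> = ennreal (1 / real (vM m n))"
    by (simp add: prod_ennreal vM_def prod_dividef)
  finally show ?thesis .
qed

definition zero_prefix :: "nat \<Rightarrow> (nat \<Rightarrow> nat) \<Rightarrow> bool" where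
  "zero_prefix n x \<longleftrightarrow> (\<forall>j<n. x j = 0)"

lemma zero_prefix_Suc: "zero_prefix (Suc n) x \<longleftrightarrow> zero_prefix n x \<and> x n = 0"
  by (auto simp: zero_prefix_def less_Suc_eq)

lemma zero_prefix_upd: "n \<le> k \<Longrightarrow> zero_prefix n (x(k := j)) = zero_prefix n x"
  by (auto simp: zero_prefix_def)

lemma vI_zero: "vI m n (\<lambda>_. 0) = {x \<in> space (vilenkin_measure m). zero_prefix n x}"
  by (simp add: vI_def zero_prefix_def)

text \<open>Integrating over I_n a function of the coordinate x_n averages it over Z_{m_n}:
  I_n splits into the m_n sets I_{n+1}(0,\<dots>,0,a), each of measure 1/M_{n+1}.\<close>
lemma integral_next_coordinate:
  fixes h :: "nat \<Rightarrow> complex"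
  assumes m: "\<And>k. m k > 0"
  shows "(\<integral>x. indicator (vI m n (\<lambda>_. 0)) x *\<^sub>R h (x n) \<partial>vilenkin_measure m) =
         (\<Sum>a<m n. h a) / of_nat (vM m (Suc n))"
proof -
  interpret P: prob_space "vilenkin_measure m" by (rule prob_space_vilenkin[OF m])
  define J where "J a = vI m (Suc n) (\<lambda>j. if j = n then a else 0)" for a
  have J: "J a \<in> sets (vilenkin_measure m)" "measure (vilenkin_measure m) (J a) = 1 / real (vM m (Suc n))"
    if "a < m n" for a
    using that m sets_vI emeasure_vI[of m "Suc n"] unfolding J_def measure_def by auto
  have split: "indicator (vI m n (\<lambda>_. 0)) x *\<^sub>R h (x n) = (\<Sum>a<m n. indicator (J a) x *\<^sub>R h a)"
    if x: "x \<in> space (vilenkin_measure m)" for x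
  proof -
    have "indicator (J a) x = (if zero_prefix n x \<and> a = x n then 1 else (0::real))" for a
      using x by (auto simp: J_def vI_def zero_prefix_def indicator_def less_Suc_eq)
    moreover have "x n < m n" using x by (simp add: space_vilenkin)
    ultimately show ?thesis
      using x by (simp add: vI_zero indicator_def if_distrib[of "\<lambda>r. r *\<^sub>R _"] sum.delta
          cong: if_cong)
  qed
  have "(\<integral>x. indicator (vI m n (\<lambda>_. 0)) x *\<^sub>R h (x n) \<partial>vilenkin_measure m) =
        (\<integral>x. (\<Sum>a<m n. indicator (J a) x *\<^sub>R h a) \<partial>vilenkin_measure m)"
    using split by (intro Bochner_Integration.integral_cong) auto
  also have "\<dots> = (\<Sum>a<m n. \<integral>x. indicator (J a) x *\<^sub>R h a \<partial>vilenkin_measure m)"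
    using J by (intro Bochner_Integration.integral_sum integrable_scaleR_left integrable_indicator)
      (auto simp: P.emeasure_finite less_top[symmetric])
  also have "\<dots> = (\<Sum>a<m n. measure (vilenkin_measure m) (J a) *\<^sub>R h a)"
    using J by (intro sum.cong refl, subst integral_scaleR_left)
      (auto intro!: integrable_indicator simp: P.emeasure_finite less_top[symmetric]
        Int_absorb2 sets.sets_into_space)
  also have "\<dots> = (\<Sum>a<m n. h a) / of_nat (vM m (Suc n))"
    using J by (simp add: scaleR_conv_of_real sum_divide_distrib)
  finally show ?thesis .
qed

section \<open>Mixed-radix arithmetic\<close>

lemma vM_0 [simp]: "vM m 0 = 1"
  by (simp add: vM_def)

lemma vM_Suc: "vM m (Suc k) = m k * vM m k"
  by (simp add: vM_def)

lemma vM_pos: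
  assumes "\<And>k. m k > 0"
  shows "vM m k > 0"
  using assms by (simp add: vM_def)

lemma vM_ge_pow2:
  assumes "\<And>k. m k \<ge> 2"
  shows "2 ^ k \<le> vM m k"
proof (induction k)
  case (Suc k)
  then show ?case using assms[of k] by (simp add: vM_Suc mult_mono)
qed simp

lemma vM_gt:
  assumes "\<And>k. m k \<ge> 2"
  shows "k < vM m k"
  using vM_ge_pow2[of m k, OF assms] less_exp[of k] by linarith

lemma vM_le_pow:
  assumes "\<And>k. m k \<le> B"
  shows "vM m k \<le> B ^ k"
proof (induction k)
  case (Suc k)
  then show ?case using assms[of k] by (simp add: vM_Suc mult_le_mono)
qed simp

lemma vM_dvd:
  assumes "K \<le> k"
  shows "vM m K dvd vM m k"
  using assms
proof (induction k)
  case (Suc k)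
  then show ?case by (cases "K = Suc k") (auto simp: vM_Suc)
qed simp

lemma vM_mono:
  assumes "\<And>k. m k > 0" and "K \<le> k"
  shows "vM m K \<le> vM m k"
  using vM_dvd[OF assms(2)] vM_pos[OF assms(1)] by (rule dvd_imp_le)

lemma vdigit_small:
  assumes "b < vM m k"
  shows "vdigit m b k = 0"
  using assms by (simp add: vdigit_def)

lemma vdigit_low:
  assumes "k < K"
  shows "vdigit m (a * vM m K + b) k = vdigit m b k"
proof -
  obtain e where e: "vM m K = vM m (Suc k) * e" using vM_dvd[of "Suc k" K] assms by (auto elim: dvdE)
  show ?thesis
  proof (cases "vM m k = 0")
    case False
    have eq: "a * vM m K + b = b + (a * e * m k) * vM m k"
      by (simp add: e vM_Suc mult_ac)
    have "(a * vM m K + b) div vM m k = b div vM m k + (a * e) * m k"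
      unfolding eq div_mult_self1[OF False] by (rule add.commute)
    then show ?thesis by (simp only: vdigit_def mod_mult_self1)
  qed (simp add: vdigit_def)
qed

lemma vdigit_high:
  assumes "K \<le> k" and "b < vM m K"
  shows "vdigit m (a * vM m K + b) k = vdigit m (a * vM m K) k"
proof -
  obtain e where e: "vM m k = vM m K * e" using vM_dvd[OF assms(1)] by (auto elim: dvdE)
  have "(a * vM m K + b) div vM m k = a div e" "(a * vM m K) div vM m k = a div e"
    using assms(2) by (simp_all add: e div_mult2_eq)
  then show ?thesis by (simp add: vdigit_def)
qed

section \<open>Vilenkin functions\<close>

lemma norm_vpsi [simp]: "cmod (vpsi m i x) = 1"
  by (simp add: vpsi_def rademacher_def prod_norm[symmetric] norm_power)

lemma vpsi_prod_lessThan: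
  assumes m: "\<And>k. m k \<ge> 2" and i: "i < vM m L"
  shows "vpsi m i x = (\<Prod>k<L. rademacher m k x ^ vdigit m i k)"
proof -
  let ?g = "\<lambda>k. rademacher m k x ^ vdigit m i k"
  have m0: "\<And>k. m k > 0" using m by (metis less_le_trans pos2)
  have trivial: "?g k = 1" if "i < k \<or> L \<le> k" for k
  proof -
    have "i < vM m k"
      using that vM_gt[of m k, OF m] vM_mono[of m L k, OF m0] i by auto
    then show ?thesis by (simp add: vdigit_small)
  qed
  have "vpsi m i x = prod ?g {..<max (Suc i) L}"
    unfolding vpsi_def by (rule prod.mono_neutral_left) (use trivial in auto)
  also have "\<dots> = prod ?g {..<L}"
    by (rule prod.mono_neutral_right) (use trivial in auto)
  finally show ?thesis .
qed

text \<open>\<psi>_{a M_K + b} = \<psi>_{a M_K} \<psi>_b for b < M_K: the digits of a M_K and b do not overlap.\<close>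
lemma vpsi_mult:
  assumes m: "\<And>k. m k \<ge> 2" and b: "b < vM m K"
  shows "vpsi m (a * vM m K + b) x = vpsi m (a * vM m K) x * vpsi m b x"
proof -
  have m0: "\<And>k. m k > 0" using m by (metis less_le_trans pos2)
  define L where "L = a * vM m K + b + K"
  have L: "a * vM m K + b < vM m L" "a * vM m K < vM m L" "b < vM m L"
    using vM_gt[of m L, OF m] by (auto simp: L_def)
  have digits: "rademacher m k x ^ vdigit m (a * vM m K + b) k =
      rademacher m k x ^ vdigit m (a * vM m K) k * rademacher m k x ^ vdigit m b k" for k
  proof (cases "k < K")
    case True
    then show ?thesis using vdigit_low[OF True, of m a 0] vdigit_low[OF True, of m a b]
      by (simp add: vdigit_def)
  next
    case False
    then have "vdigit m b k = 0" using vdigit_small vM_mono[of m K k, OF m0] b by auto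
    then show ?thesis using vdigit_high[where K=K and k=k and m=m and b=b and a=a] False b by simp
  qed
  show ?thesis
    unfolding vpsi_prod_lessThan[OF m L(1)] vpsi_prod_lessThan[OF m L(2)]
      vpsi_prod_lessThan[OF m L(3)] prod.distrib[symmetric] digits ..
qed

lemma vpsi_zero_prefix:
  assumes m: "\<And>k. m k \<ge> 2" and x: "zero_prefix t x" and b: "b < vM m (Suc t)"
  shows "vpsi m b x = rademacher m t x ^ (b div vM m t)"
proof -
  have m0: "\<And>k. m k > 0" using m by (metis less_le_trans pos2)
  have "vpsi m b x = (\<Prod>k<Suc t. rademacher m k x ^ vdigit m b k)"
    by (rule vpsi_prod_lessThan[OF m b])
  also have "\<dots> = rademacher m t x ^ vdigit m b t"
    using x by (simp add: rademacher_def zero_prefix_def)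
  also have "vdigit m b t = b div vM m t"
    using b vM_pos[of m t, OF m0]
    by (simp add: vdigit_def vM_Suc div_less_iff_less_mult mult.commute)
  finally show ?thesis .
qed

section \<open>Roots of unity\<close>

lemma cis_root_pow:
  assumes "m > 0"
  shows "cis (2 * pi * real a / real m) ^ m = 1"
proof -
  have "cis (2 * pi * real a / real m) ^ m = cis (real m * (2 * pi * real a / real m))"
    by (rule Complex.DeMoivre)
  also have "\<dots> = cis (2 * pi * real a)" using assms by simp
  also have "\<dots> = 1" by (rule cis_multiple_2pi) simp
  finally show ?thesis .
qed

lemma cis_root_ne1:
  assumes "0 < a" "a < m"
  shows "cis (2 * pi * real a / real m) \<noteq> 1"
proof
  assume "cis (2 * pi * real a / real m) = 1"
  then have "cos (2 * pi * real a / real m) = 1" by (metis cis.sel(1) one_complex.sel(1))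
  then obtain n :: int where n: "2 * pi * real a / real m = n * 2 * pi"
    by (auto simp: cos_one_2pi_int)
  then have "real a / real m = n" using assms by (simp add: field_simps)
  moreover have "0 < real a / real m" "real a / real m < 1" using assms by auto
  ultimately show False by simp
qed

lemma sum_root_powers:
  assumes "d < m"
  shows "(\<Sum>a<m. cis (2 * pi * real a / real m) ^ d) = (if d = 0 then of_nat m else 0)"
proof (cases "d = 0")
  case False
  define \<omega> where "\<omega> = cis (2 * pi * real d / real m)"
  have swap: "cis (2 * pi * real a / real m) ^ d = \<omega> ^ a" for a
  proof -
    have "cis (2 * pi * real a / real m) ^ d = cis (real d * (2 * pi * real a / real m))"
      by (rule Complex.DeMoivre)
    also have "\<dots> = cis (real a * (2 * pi * real d / real m))" by (simp add: algebra_simps)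
    finally show ?thesis unfolding \<omega>_def Complex.DeMoivre .
  qed
  have "\<omega> ^ m = 1" "\<omega> \<noteq> 1"
    unfolding \<omega>_def using assms False cis_root_ne1[of d m] by (auto intro: cis_root_pow)
  then show ?thesis using False by (simp add: swap sum_gp_strict)
qed simp

text \<open>The double geometric sum that produces the Fejer mean of the test martingale:
  for a nontrivial m-th root of unity \<rho>, \<Sum>_{q<mM} \<Sum>_{b<q} \<rho>^{\<lfloor>b/M\<rfloor>} = M^2 m / (1 - \<rho>).
  The inner sums are first computed blockwise.\<close>
lemma sum_block_powers:
  fixes \<rho> :: complex
  assumes M: "M > 0" and c: "c \<le> M"
  shows "(\<Sum>b<a * M + c. \<rho> ^ (b div M)) = of_nat M * (\<Sum>j<a. \<rho> ^ j) + of_nat c * \<rho> ^ a"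
  using c
proof (induction a arbitrary: c)
  case 0
  then show ?case by (induction c) auto
next
  case (Suc a)
  have full_block: "(\<Sum>b<a * M + M. \<rho> ^ (b div M)) = of_nat M * (\<Sum>j<Suc a. \<rho> ^ j)"
    using Suc.IH[of M] by (simp add: algebra_simps)
  show ?case using Suc.prems
  proof (induction c)
    case 0
    then show ?case using full_block by (simp add: add.commute)
  next
    case (Suc c)
    have "(c + Suc a * M) div M = Suc a + c div M" by (rule div_mult_self1) (use M in simp)
    also have "c div M = 0" using Suc.prems by simp
    finally have "(M + a * M + c) div M = Suc a" by (simp add: algebra_simps)
    with Suc show ?case by (simp add: algebra_simps)
  qed
qed

lemma sum_lessThan_add:
  fixes f :: "nat \<Rightarrow> 'a::comm_monoid_add"
  shows "(\<Sum>q<n + k. f q) = (\<Sum>q<n. f q) + (\<Sum>c<k. f (n + c))"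
  by (induction k) (auto simp: add.assoc)

lemma sum_partial_block_powers:
  fixes \<rho> :: complex
  assumes M: "M > 0" and root: "\<rho> ^ m = 1" and nontrivial: "\<rho> \<noteq> 1"
  shows "(\<Sum>q<m * M. \<Sum>b<q. \<rho> ^ (b div M)) = of_nat (M * M * m) / (1 - \<rho>)"
proof -
  define S where "S = (\<Sum>c<M. of_nat c :: complex)"
  have blocks: "(\<Sum>q<a * M. \<Sum>b<q. \<rho> ^ (b div M)) =
     (\<Sum>j<a. of_nat M * of_nat M * (\<Sum>i<j. \<rho> ^ i) + S * \<rho> ^ j)" for a
  proof (induction a)
    case (Suc a)
    have "(\<Sum>q<Suc a * M. \<Sum>b<q. \<rho> ^ (b div M)) =
          (\<Sum>q<a * M. \<Sum>b<q. \<rho> ^ (b div M)) + (\<Sum>c<M. \<Sum>b<a * M + c. \<rho> ^ (b div M))"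
      using sum_lessThan_add[of _ "a * M" M] by (simp add: add.commute)
    also have "(\<Sum>c<M. \<Sum>b<a * M + c. \<rho> ^ (b div M)) =
               (\<Sum>c<M. of_nat M * (\<Sum>j<a. \<rho> ^ j) + of_nat c * \<rho> ^ a)"
      by (intro sum.cong refl sum_block_powers[OF M]) auto
    also have "\<dots> = of_nat M * of_nat M * (\<Sum>i<a. \<rho> ^ i) + S * \<rho> ^ a"
      by (simp add: sum.distrib S_def sum_distrib_right)
    finally show ?case using Suc.IH by simp
  qed simp
  have powers: "(\<Sum>j<m. \<rho> ^ j) = 0"
    using root nontrivial by (simp add: sum_gp_strict)
  have partial: "(\<Sum>j<m. \<Sum>i<j. \<rho> ^ i) = of_nat m / (1 - \<rho>)"
  proof -
    have "(\<Sum>j<m. \<Sum>i<j. \<rho> ^ i) = (\<Sum>j<m. (1 - \<rho> ^ j) / (1 - \<rho>))"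
      using nontrivial by (simp add: sum_gp_strict)
    also have "\<dots> = (of_nat m - (\<Sum>j<m. \<rho> ^ j)) / (1 - \<rho>)"
      by (simp add: sum_divide_distrib[symmetric] sum_subtractf)
    finally show ?thesis using powers by simp
  qed
  have "(\<Sum>q<m * M. \<Sum>b<q. \<rho> ^ (b div M)) =
        of_nat M * of_nat M * (\<Sum>j<m. \<Sum>i<j. \<rho> ^ i) + S * (\<Sum>j<m. \<rho> ^ j)"
    by (simp add: blocks sum.distrib sum_distrib_left)
  then show ?thesis using partial powers by simp
qed

section \<open>The test martingales\<close>

text \<open>f_N: its k-th term is D_{M_{N+1}} - D_{M_N} = M_{N+1} 1_{I_{N+1}} - M_N 1_{I_N} for k > N,
  and 0 for k \<le> N (the conditional expectation of that difference onto F_N vanishes).\<close>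
definition test_martingale :: "(nat \<Rightarrow> nat) \<Rightarrow> nat \<Rightarrow> nat \<Rightarrow> (nat \<Rightarrow> nat) \<Rightarrow> complex" where
  "test_martingale m N k x = (if k \<le> N then 0 else
     (if zero_prefix (Suc N) x then of_nat (vM m (Suc N)) else 0) -
     (if zero_prefix N x then of_nat (vM m N) else 0))"

lemma test_martingale_vmartingale:
  assumes m: "\<And>k. m k > 0"
  shows "vmartingale m (test_martingale m N)"
  unfolding vmartingale_def
proof (intro conjI allI ballI)
  fix n
  show "Fn_measurable m n (test_martingale m N n)"
    unfolding Fn_measurable_def
  proof (intro ballI impI)
    fix x y :: "nat \<Rightarrow> nat"
    assume "\<forall>j<n. y j = x j"
    then have "N < n \<Longrightarrow> zero_prefix (Suc N) y = zero_prefix (Suc N) x \<and>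
                       zero_prefix N y = zero_prefix N x"
      by (auto simp: zero_prefix_def)
    then show "test_martingale m N n y = test_martingale m N n x"
      by (cases "n \<le> N") (auto simp: test_martingale_def)
  qed
next
  fix n x
  let ?avg = "(\<Sum>j<m n. test_martingale m N (Suc n) (x(n := j))) / of_nat (m n)"
  have mn: "m n > 0" by (rule m)
  consider "Suc n \<le> N" | "n = N" | "N < n" by linarith
  then show "test_martingale m N n x = ?avg"
  proof cases
    case 1
    then show ?thesis by (simp add: test_martingale_def)
  next
    case 2
    text \<open>Exactly one of the m_N translates x(N := j) lies in I_{N+1}, so the average vanishes.\<close>
    have "(\<Sum>j<m n. test_martingale m N (Suc n) (x(n := j))) =
          (\<Sum>j<m n. (if zero_prefix N x \<and> j = 0 then of_nat (vM m (Suc N)) else 0) -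
                     (if zero_prefix N x then of_nat (vM m N) else 0))"
      using 2 by (intro sum.cong refl) (auto simp: test_martingale_def zero_prefix_Suc zero_prefix_upd)
    also have "\<dots> = 0" using 2 mn by (simp add: sum_subtractf vM_Suc)
    finally show ?thesis using 2 by (simp add: test_martingale_def)
  next
    case 3
    have "(\<Sum>j<m n. test_martingale m N (Suc n) (x(n := j))) = (\<Sum>j<m n. test_martingale m N n x)"
      using 3 by (intro sum.cong refl) (auto simp: test_martingale_def zero_prefix_upd)
    then show ?thesis using mn by simp
  qed
qed

lemma test_martingale_coefficient:
  assumes m: "\<And>k. m k \<ge> 2" and k: "N < k" and i: "i < vM m (Suc N)"
  shows "(\<integral>x. test_martingale m N k x * cnj (vpsi m i x) \<partial>vilenkin_measure m) =
         (if i < vM m N then 0 else 1)"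
proof -
  have m0: "\<And>k. m k > 0" using m by (metis less_le_trans pos2)
  define d where "d = i div vM m N"
  have d: "d < m N" using i vM_pos[of m N, OF m0]
    by (simp add: d_def vM_Suc div_less_iff_less_mult mult.commute)
  have d0: "d = 0 \<longleftrightarrow> i < vM m N" using vM_pos[of m N, OF m0] by (auto simp: d_def div_eq_0_iff)
  define \<omega> where "\<omega> a = cis (2 * pi * real a / real (m N))" for a
  define h where "h a = ((if a = 0 then of_nat (vM m (Suc N)) else 0) - of_nat (vM m N)) *
                        cnj (\<omega> a ^ d)" for a
  have integrand: "test_martingale m N k x * cnj (vpsi m i x) =
                   indicator (vI m N (\<lambda>_. 0)) x *\<^sub>R h (x N)"
    if x: "x \<in> space (vilenkin_measure m)" for x
  proof (cases "zero_prefix N x")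
    case True
    have "vpsi m i x = \<omega> (x N) ^ d"
      using vpsi_zero_prefix[OF m True i] by (simp add: \<omega>_def rademacher_def d_def)
    then show ?thesis using k True x by (simp add: test_martingale_def h_def zero_prefix_Suc vI_zero)
  qed (use k x in \<open>simp add: test_martingale_def zero_prefix_Suc vI_zero\<close>)
  have "h a = (if a = 0 then of_nat (vM m (Suc N)) else 0) - of_nat (vM m N) * cnj (\<omega> a ^ d)"
    for a by (simp add: h_def \<omega>_def algebra_simps)
  then have "(\<Sum>a<m N. h a) = of_nat (vM m (Suc N)) - of_nat (vM m N) * cnj (\<Sum>a<m N. \<omega> a ^ d)"
    using m0[of N] by (simp add: sum_subtractf sum_distrib_left)
  also have "\<dots> = (if d = 0 then 0 else of_nat (vM m (Suc N)))"
    using sum_root_powers[OF d] by (simp add: \<omega>_def vM_Suc)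
  finally have "(\<Sum>a<m N. h a) = (if d = 0 then 0 else of_nat (vM m (Suc N)))" .
  moreover have "(\<integral>x. test_martingale m N k x * cnj (vpsi m i x) \<partial>vilenkin_measure m) =
                 (\<Sum>a<m N. h a) / of_nat (vM m (Suc N))"
    using integrand integral_next_coordinate[OF m0]
    by (subst Bochner_Integration.integral_cong[OF refl integrand]) auto
  ultimately show ?thesis using d0 vM_pos[of m "Suc N", OF m0] by simp
qed

lemma vfourier_test_martingale:
  assumes m: "\<And>k. m k \<ge> 2" and i: "i < vM m (Suc N)"
  shows "vfourier m (test_martingale m N) i = (if i < vM m N then 0 else 1)"
  unfolding vfourier_def
proof (rule limI, rule tendsto_eventually)
  show "\<forall>\<^sub>F k in sequentially.
          (\<integral>x. test_martingale m N k x * cnj (vpsi m i x) \<partial>vilenkin_measure m) =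
          (if i < vM m N then 0 else 1)"
    by (rule eventually_mono[OF eventually_gt_at_top[of N]])
      (rule test_martingale_coefficient[OF m _ i])
qed

section \<open>The Fejer means of the test martingales\<close>

lemma vfourier_test_martingale_le:
  assumes m: "\<And>k. m k \<ge> 2" and i: "i < vM m N + vM m N"
  shows "vfourier m (test_martingale m N) i = (if i < vM m N then 0 else 1)"
proof -
  have "vM m N + vM m N \<le> vM m (Suc N)"
    using m[of N] by (simp add: vM_Suc mult_2[symmetric])
  then show ?thesis using vfourier_test_martingale[OF m] i by simp
qed

lemma vpartial_sum_test_martingale_low:
  assumes m: "\<And>k. m k \<ge> 2" and k: "k \<le> vM m N"
  shows "vpartial_sum m (test_martingale m N) k x = 0"
  unfolding vpartial_sum_def using k
  by (intro sum.neutral) (auto simp: vfourier_test_martingale_le[OF m])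

lemma vpartial_sum_test_martingale_high:
  assumes m: "\<And>k. m k \<ge> 2" and tN: "t < N" and x: "zero_prefix t x"
    and q: "q \<le> vM m (Suc t)"
  shows "vpartial_sum m (test_martingale m N) (vM m N + q) x =
         vpsi m (vM m N) x * (\<Sum>b<q. rademacher m t x ^ (b div vM m t))"
proof -
  have m0: "\<And>k. m k > 0" using m by (metis less_le_trans pos2)
  have qN: "q \<le> vM m N" using q vM_mono[of m "Suc t" N, OF m0] tN by simp
  have "vpartial_sum m (test_martingale m N) (vM m N + q) x =
        vpartial_sum m (test_martingale m N) (vM m N) x +
        (\<Sum>b<q. vfourier m (test_martingale m N) (vM m N + b) * vpsi m (vM m N + b) x)"
    unfolding vpartial_sum_def by (rule sum_lessThan_add)
  also have "vpartial_sum m (test_martingale m N) (vM m N) x = 0"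
    by (rule vpartial_sum_test_martingale_low[OF m order.refl])
  also have "(\<Sum>b<q. vfourier m (test_martingale m N) (vM m N + b) * vpsi m (vM m N + b) x) =
             (\<Sum>b<q. vpsi m (vM m N) x * rademacher m t x ^ (b div vM m t))"
  proof (intro sum.cong refl)
    fix b assume "b \<in> {..<q}"
    then have b: "b < q" by simp
    have "vfourier m (test_martingale m N) (vM m N + b) = 1"
      using vfourier_test_martingale_le[where i="vM m N + b" and N=N, OF m] b qN by simp
    moreover have "vpsi m (vM m N + b) x = vpsi m (vM m N) x * vpsi m b x"
      using vpsi_mult[where b=b and K=N and a=1, OF m] b qN by simp
    moreover have "vpsi m b x = rademacher m t x ^ (b div vM m t)"
      using vpsi_zero_prefix[OF m x, of b] b q by simp
    ultimately show "vfourier m (test_martingale m N) (vM m N + b) * vpsi m (vM m N + b) x =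
                     vpsi m (vM m N) x * rademacher m t x ^ (b div vM m t)" by simp
  qed
  finally show ?thesis by (simp add: sum_distrib_left)
qed

text \<open>Indeed the Fejer sum equals
  \<psi>_{M_N} M_t^2 m_t / (1 - r_t), and |1 - r_t| \<le> 2.\<close>
lemma vfejer_test_martingale_lower:
  assumes m: "\<And>k. m k \<ge> 2" and tN: "t < N" and x: "zero_prefix t x"
    and xt: "0 < x t" "x t < m t"
  shows "real (vM m t * vM m (Suc t)) / (2 * real (vM m N + vM m (Suc t))) \<le>
         cmod (vfejer m (test_martingale m N) (vM m N + vM m (Suc t)) x)"
proof -
  have m0: "\<And>k. m k > 0" using m by (metis less_le_trans pos2)
  define A where "A = vM m N"
  define Q where "Q = vM m (Suc t)"
  define \<rho> where "\<rho> = rademacher m t x"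
  have root: "\<rho> ^ m t = 1" unfolding \<rho>_def rademacher_def by (rule cis_root_pow[OF m0])
  have nontrivial: "\<rho> \<noteq> 1" unfolding \<rho>_def rademacher_def by (rule cis_root_ne1[OF xt])
  have "(\<Sum>k<A + Q. vpartial_sum m (test_martingale m N) k x) =
        (\<Sum>k<A. vpartial_sum m (test_martingale m N) k x) +
        (\<Sum>q<Q. vpartial_sum m (test_martingale m N) (A + q) x)"
    by (rule sum_lessThan_add)
  also have "(\<Sum>k<A. vpartial_sum m (test_martingale m N) k x) = 0"
    unfolding A_def by (intro sum.neutral) (auto simp: vpartial_sum_test_martingale_low[OF m])
  also have "(\<Sum>q<Q. vpartial_sum m (test_martingale m N) (A + q) x) =
             vpsi m A x * (\<Sum>q<Q. \<Sum>b<q. \<rho> ^ (b div vM m t))"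
    unfolding A_def Q_def \<rho>_def
    by (simp add: vpartial_sum_test_martingale_high[OF m tN x] sum_distrib_left)
  also have "(\<Sum>q<Q. \<Sum>b<q. \<rho> ^ (b div vM m t)) = of_nat (vM m t * vM m t * m t) / (1 - \<rho>)"
    unfolding Q_def vM_Suc by (rule sum_partial_block_powers[OF vM_pos[OF m0] root nontrivial])
  finally have fejer: "cmod (vfejer m (test_martingale m N) (A + Q) x) =
      real (vM m t * vM m t * m t) / cmod (1 - \<rho>) / real (A + Q)"
    unfolding vfejer_def by (simp add: norm_mult norm_divide del: of_nat_add)
  have "cmod (1 - \<rho>) \<le> 2"
    using norm_triangle_ineq4[of 1 \<rho>] by (simp add: \<rho>_def rademacher_def)
  moreover have "cmod (1 - \<rho>) > 0" using nontrivial by simp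
  ultimately have "real (vM m t * vM m t * m t) / 2 / real (A + Q) \<le>
                   cmod (vfejer m (test_martingale m N) (A + Q) x)"
    unfolding fejer by (intro divide_right_mono divide_left_mono) auto
  then show ?thesis by (simp add: A_def Q_def vM_Suc mult_ac)
qed

section \<open>The L_{1/2} quasi-norm\<close>

definition half_power :: "('a \<Rightarrow> ennreal) \<Rightarrow> 'a \<Rightarrow> ennreal" where
  "half_power g x = (if g x = \<top> then \<top> else ennreal (enn2real (g x) powr (1/2)))"

lemma Lp_qnorm_half:
  "Lp_qnorm M (1/2) g = (if integral\<^sup>N M (half_power g) = \<top> then \<top>
                         else ennreal ((enn2real (integral\<^sup>N M (half_power g)))\<^sup>2))"
proof -
  have "enn2real (integral\<^sup>N M (half_power g)) powr 2 = (enn2real (integral\<^sup>N M (half_power g)))\<^sup>2"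
    by (simp add: enn2real_nonneg)
  then show ?thesis unfolding Lp_qnorm_def Let_def half_power_def[symmetric] by simp
qed

lemma Lp_qnorm_half_upper:
  assumes "integral\<^sup>N M (half_power g) \<le> ennreal r" and "0 \<le> r"
  shows "Lp_qnorm M (1/2) g \<le> ennreal (r\<^sup>2)" and "Lp_qnorm M (1/2) g < \<top>"
proof -
  have finite: "integral\<^sup>N M (half_power g) \<noteq> \<top>"
    using assms(1) by (metis ennreal_neq_top neq_top_trans)
  have "enn2real (integral\<^sup>N M (half_power g)) \<le> r" using assms by (simp add: enn2real_leI)
  then have "(enn2real (integral\<^sup>N M (half_power g)))\<^sup>2 \<le> r\<^sup>2"
    by (intro power_mono) (auto simp: enn2real_nonneg)
  then show "Lp_qnorm M (1/2) g \<le> ennreal (r\<^sup>2)" using finite by (simp add: Lp_qnorm_half)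
  show "Lp_qnorm M (1/2) g < \<top>" using finite by (simp add: Lp_qnorm_half)
qed

lemma Lp_qnorm_half_lower:
  assumes "ennreal r \<le> integral\<^sup>N M (half_power g)" and "0 \<le> r"
  shows "ennreal (r\<^sup>2) \<le> Lp_qnorm M (1/2) g"
proof (cases "integral\<^sup>N M (half_power g) = \<top>")
  case False
  have "r \<le> enn2real (integral\<^sup>N M (half_power g))"
    using enn2real_mono[OF assms(1)] False assms(2) by (simp add: less_top)
  then have "r\<^sup>2 \<le> (enn2real (integral\<^sup>N M (half_power g)))\<^sup>2" by (rule power_mono) (use assms in simp)
  then show ?thesis using False by (simp add: Lp_qnorm_half)
qed (simp add: Lp_qnorm_half)

lemma half_power_le:
  assumes "g x \<le> ennreal a" and "0 \<le> a"
  shows "half_power g x \<le> ennreal (sqrt a)"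
proof -
  have "g x \<noteq> \<top>" using assms(1) by (metis ennreal_neq_top neq_top_trans)
  moreover have "enn2real (g x) \<le> a" using assms by (simp add: enn2real_leI)
  ultimately show ?thesis using assms by (simp add: half_power_def powr_half_sqrt enn2real_nonneg)
qed

lemma half_power_ge:
  assumes "ennreal a \<le> g x" and "0 \<le> a"
  shows "ennreal (sqrt a) \<le> half_power g x"
proof (cases "g x = \<top>")
  case False
  have "a \<le> enn2real (g x)" using enn2real_mono[OF assms(1)] False assms(2) by (simp add: less_top)
  then show ?thesis using False assms by (simp add: half_power_def powr_half_sqrt enn2real_nonneg)
qed (simp add: half_power_def)

text \<open>f_N^* \<le> M_{N+1} 1_{I_N}, hence \<parallel>f_N\<parallel>_{H_{1/2}} \<le> (M_{N+1}^{1/2} \<mu>(I_N))^2 = M_{N+1}/M_N^2.\<close>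
lemma Hp_norm_test_martingale:
  assumes m: "\<And>k. m k \<ge> 2"
  shows "Hp_norm m (1/2) (test_martingale m N) \<le> ennreal (real (vM m (Suc N)) / (real (vM m N))\<^sup>2)"
    and "Hp_norm m (1/2) (test_martingale m N) < \<top>"
proof -
  have m0: "\<And>k. m k > 0" using m by (metis less_le_trans pos2)
  define I where "I = vI m N (\<lambda>_. 0)"
  define a where "a = sqrt (real (vM m (Suc N)))"
  have bound: "half_power (mart_max (test_martingale m N)) x \<le> ennreal a * indicator I x"
    if x: "x \<in> space (vilenkin_measure m)" for x
  proof (cases "zero_prefix N x")
    case True
    have "vM m N \<le> vM m (Suc N)" by (rule vM_mono[OF m0]) simp
    then have "cmod (test_martingale m N n x) \<le> real (vM m (Suc N))" for n
      using True by (auto simp: test_martingale_def zero_prefix_Suc of_nat_diff[symmetric]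
          simp del: of_nat_diff)
    then have "mart_max (test_martingale m N) x \<le> ennreal (real (vM m (Suc N)))"
      unfolding mart_max_def by (intro SUP_least ennreal_leI)
    then show ?thesis
      using half_power_le[of "mart_max (test_martingale m N)" x] True x
      by (simp add: a_def I_def vI_zero)
  next
    case False
    then have "test_martingale m N n x = 0" for n
      by (simp add: test_martingale_def zero_prefix_Suc)
    then have "mart_max (test_martingale m N) x = 0" by (simp add: mart_max_def)
    then show ?thesis by (simp add: half_power_def)
  qed
  have "integral\<^sup>N (vilenkin_measure m) (half_power (mart_max (test_martingale m N))) \<le>
        (\<integral>\<^sup>+x. ennreal a * indicator I x \<partial>vilenkin_measure m)"
    by (rule nn_integral_mono) (rule bound)
  also have "\<dots> = ennreal (a / real (vM m N))"
    using m0 by (simp add: I_def nn_integral_cmult_indicator emeasure_vI ennreal_mult[symmetric] a_def)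
  finally have integral: "integral\<^sup>N (vilenkin_measure m)
      (half_power (mart_max (test_martingale m N))) \<le> ennreal (a / real (vM m N))" .
  have "(a / real (vM m N))\<^sup>2 = real (vM m (Suc N)) / (real (vM m N))\<^sup>2"
    by (simp add: a_def power_divide)
  then show "Hp_norm m (1/2) (test_martingale m N) \<le>
             ennreal (real (vM m (Suc N)) / (real (vM m N))\<^sup>2)"
    using Lp_qnorm_half_upper(1)[OF integral] by (simp add: Hp_norm_def a_def)
  show "Hp_norm m (1/2) (test_martingale m N) < \<top>"
    using Lp_qnorm_half_upper(2)[OF integral] by (simp add: Hp_norm_def a_def)
qed

definition fejer_maximal ::
    "(nat \<Rightarrow> nat) \<Rightarrow> (nat \<Rightarrow> real) \<Rightarrow> (nat \<Rightarrow> (nat \<Rightarrow> nat) \<Rightarrow> complex) \<Rightarrow> (nat \<Rightarrow> nat) \<Rightarrow> ennreal"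
  where "fejer_maximal m \<phi> f = (\<lambda>x. SUP n\<in>{1..}. ennreal (cmod (vfejer m f n x) / \<phi> n))"

text \<open>On the annulus I_t - I_{t+1}, t < N, the index n = M_N + M_{t+1} \<le> 2 M_N gives
  sup_n |\<sigma>_n f_N| / \<phi>(n) \<ge> M_t M_{t+1} / (4 M_N \<phi>(2 M_N)).\<close>
lemma fejer_maximal_test_martingale_annulus:
  assumes m: "\<And>k. m k \<ge> 2"
    and phi_ge1: "\<And>n. n \<ge> 1 \<Longrightarrow> \<phi> n \<ge> 1" and phi_mono: "mono_on {1..} \<phi>"
    and tN: "t < N" and x: "zero_prefix t x" and xt: "0 < x t" "x t < m t"
  shows "ennreal (real (vM m t * vM m (Suc t)) / (4 * real (vM m N) * \<phi> (2 * vM m N))) \<le>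
         fejer_maximal m \<phi> (test_martingale m N) x"
proof -
  have m0: "\<And>k. m k > 0" using m by (metis less_le_trans pos2)
  define n where "n = vM m N + vM m (Suc t)"
  define P where "P = real (vM m t * vM m (Suc t))"
  have "vM m (Suc t) \<le> vM m N" using vM_mono[of m "Suc t" N, OF m0] tN by simp
  then have n: "1 \<le> n" "n \<le> 2 * vM m N" using vM_pos[of m N, OF m0] by (auto simp: n_def)
  have phi_n: "1 \<le> \<phi> n" "\<phi> n \<le> \<phi> (2 * vM m N)"
    using n phi_ge1 by (auto intro: mono_onD[OF phi_mono])
  have "2 * real n * \<phi> n \<le> 4 * real (vM m N) * \<phi> (2 * vM m N)"
    using n phi_n by (intro order.trans[OF mult_mono[of "2 * real n" "4 * real (vM m N)"]]) auto
  then have "P / (4 * real (vM m N) * \<phi> (2 * vM m N)) \<le> P / (2 * real n) / \<phi> n"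
    using phi_n n by (simp add: divide_divide_eq_left P_def) (intro divide_left_mono, auto)
  also have "\<dots> \<le> cmod (vfejer m (test_martingale m N) n x) / \<phi> n"
    using vfejer_test_martingale_lower[where m=m, OF m tN x xt] phi_n
    by (intro divide_right_mono) (auto simp: n_def P_def)
  finally have "ennreal (P / (4 * real (vM m N) * \<phi> (2 * vM m N))) \<le>
                ennreal (cmod (vfejer m (test_martingale m N) n x) / \<phi> n)"
    by (rule ennreal_leI)
  also have "\<dots> \<le> fejer_maximal m \<phi> (test_martingale m N) x"
    unfolding fejer_maximal_def using n by (intro SUP_upper) auto
  finally show ?thesis unfolding P_def .
qed

definition annulus :: "(nat \<Rightarrow> nat) \<Rightarrow> nat \<Rightarrow> (nat \<Rightarrow> nat) set" where
  "annulus m t = vI m t (\<lambda>_. 0) - vI m (Suc t) (\<lambda>_. 0)"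

lemma annulusD:
  assumes "x \<in> annulus m t"
  shows "zero_prefix t x" and "0 < x t" and "x t < m t"
  using assms by (auto simp: annulus_def vI_def zero_prefix_def less_Suc_eq space_vilenkin)

lemma annulus_disjoint: "x \<in> annulus m t \<Longrightarrow> x \<in> annulus m s \<Longrightarrow> t = s"
  by (cases t s rule: linorder_cases) (auto simp: annulus_def vI_def)

lemma emeasure_annulus:
  assumes m: "\<And>k. m k > 0"
  shows "emeasure (vilenkin_measure m) (annulus m t) =
         ennreal (1 / real (vM m t) - 1 / real (vM m (Suc t)))"
proof -
  have "vI m (Suc t) (\<lambda>_. 0) \<subseteq> vI m t (\<lambda>_. 0)" by (auto simp: vI_def)
  then have "emeasure (vilenkin_measure m) (annulus m t) =
      emeasure (vilenkin_measure m) (vI m t (\<lambda>_. 0)) - emeasure (vilenkin_measure m) (vI m (Suc t) (\<lambda>_. 0))"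
    unfolding annulus_def using m by (intro emeasure_Diff sets_vI) (auto simp: emeasure_vI)
  also have "\<dots> = ennreal (1 / real (vM m t) - 1 / real (vM m (Suc t)))"
    using m vM_mono[of m t "Suc t", OF m] vM_pos[of m t, OF m]
    by (simp add: emeasure_vI ennreal_minus frac_le)
  finally show ?thesis .
qed

lemma nn_integral_annuli_lower:
  assumes m: "\<And>k. m k > 0"
    and g: "\<And>t x. t < N \<Longrightarrow> x \<in> annulus m t \<Longrightarrow> ennreal (v t) \<le> g x"
  shows "(\<Sum>t<N. ennreal (v t) * emeasure (vilenkin_measure m) (annulus m t)) \<le>
         integral\<^sup>N (vilenkin_measure m) g"
proof -
  define l where "l x = (\<Sum>t<N. ennreal (v t) * indicator (annulus m t) x)" for x
  have l_le: "l x \<le> g x" for x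
  proof (cases "\<exists>s<N. x \<in> annulus m s")
    case True
    then obtain s where s: "s < N" "x \<in> annulus m s" by auto
    have "l x = (\<Sum>t<N. if t = s then ennreal (v s) else 0)"
      unfolding l_def using annulus_disjoint s by (intro sum.cong refl) (auto simp: indicator_def)
    then show ?thesis using g[OF s] s by simp
  next
    case False
    then have "l x = 0" unfolding l_def by (intro sum.neutral) (auto simp: indicator_def)
    then show ?thesis by simp
  qed
  have "annulus m t \<in> sets (vilenkin_measure m)" for t
    unfolding annulus_def using m by (intro sets.Diff sets_vI) auto
  then have "(\<Sum>t<N. ennreal (v t) * emeasure (vilenkin_measure m) (annulus m t)) =
             integral\<^sup>N (vilenkin_measure m) l"
    unfolding l_def by (subst nn_integral_sum) (auto simp: nn_integral_cmult_indicator)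
  also have "\<dots> \<le> integral\<^sup>N (vilenkin_measure m) g"
    by (intro nn_integral_mono l_le)
  finally show ?thesis .
qed

text \<open>Each annulus contributes at least (B K)^{-1/2} to \<integral> g^{1/2} when g \<ge> M_t M_{t+1}/K there:
  with a = M_t, b = M_{t+1} \<in> [2a, Ba] one has (ab/K)^{1/2} (1/a - 1/b) \<ge> (BK)^{-1/2}.\<close>
lemma annulus_contribution:
  fixes a b B K :: real
  assumes a: "a > 0" and ab: "2 * a \<le> b" and bB: "b \<le> B * a" and K: "K > 0"
  shows "sqrt (1 / (B * K)) \<le> sqrt (a * b / K) * (1 / a - 1 / b)"
proof -
  have b: "b > 0" using a ab by simp
  have B: "B > 0" using a b bB by (smt (verit) mult_nonpos_nonneg)
  have "sqrt (1 / (B * K)) \<le> sqrt (a / (b * K))"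
  proof (rule real_sqrt_le_mono)
    have "b * K \<le> a * (B * K)" using bB K by (simp add: mult.commute mult_right_mono)
    then show "1 / (B * K) \<le> a / (b * K)" using B K b by (simp add: field_simps)
  qed
  also have "sqrt (a / (b * K)) = sqrt (a * b / K) * sqrt (1 / b\<^sup>2)"
    unfolding real_sqrt_mult[symmetric] using b by (simp add: power2_eq_square field_simps)
  also have "\<dots> = sqrt (a * b / K) * (1 / b)"
    using b by (simp add: real_sqrt_divide)
  also have "\<dots> \<le> sqrt (a * b / K) * (1 / a - 1 / b)"
    using a b ab K by (intro mult_left_mono) (auto simp: field_simps)
  finally show ?thesis .
qed

lemma fejer_maximal_test_martingale_lower:
  assumes m: "\<And>k. m k \<ge> 2" and mB: "\<And>k. m k \<le> B"
    and phi_ge1: "\<And>n. n \<ge> 1 \<Longrightarrow> \<phi> n \<ge> 1" and phi_mono: "mono_on {1..} \<phi>"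
  shows "ennreal ((real N)\<^sup>2 / (4 * real B * real (vM m N) * \<phi> (2 * vM m N))) \<le>
         Lp_qnorm (vilenkin_measure m) (1/2) (fejer_maximal m \<phi> (test_martingale m N))"
proof -
  have m0: "\<And>k. m k > 0" using m by (metis less_le_trans pos2)
  let ?G = "fejer_maximal m \<phi> (test_martingale m N)"
  define K where "K = 4 * real (vM m N) * \<phi> (2 * vM m N)"
  have K: "K > 0" using vM_pos[of m N, OF m0] phi_ge1[of "2 * vM m N"] by (simp add: K_def)
  define v where "v t = sqrt (real (vM m t * vM m (Suc t)) / K)" for t
  define w where "w = sqrt (1 / (real B * K))"
  have on_annulus: "ennreal (v t) \<le> half_power ?G x" if "t < N" "x \<in> annulus m t" for t x
    using fejer_maximal_test_martingale_annulus[where m=m and \<phi>=\<phi>, OF m phi_ge1 phi_mono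
        \<open>t < N\<close> annulusD[OF \<open>x \<in> annulus m t\<close>]] K
    unfolding v_def K_def by (intro half_power_ge) auto
  have contribution: "ennreal w \<le> ennreal (v t) * emeasure (vilenkin_measure m) (annulus m t)" for t
  proof -
    have a: "real (vM m t) > 0" using vM_pos[of m t, OF m0] by simp
    have "2 * vM m t \<le> vM m (Suc t)" "vM m (Suc t) \<le> B * vM m t"
      using m[of t] mB[of t] by (simp_all add: vM_Suc)
    then have ab: "2 * real (vM m t) \<le> real (vM m (Suc t))"
      and bB: "real (vM m (Suc t)) \<le> real B * real (vM m t)"
      by (simp_all flip: of_nat_mult of_nat_le_iff)
    have "w \<le> v t * (1 / real (vM m t) - 1 / real (vM m (Suc t)))"
      unfolding w_def v_def using annulus_contribution[OF a ab bB K] by simp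
    moreover have "0 \<le> 1 / real (vM m t) - 1 / real (vM m (Suc t))"
      using a ab by (simp add: frac_le)
    ultimately show ?thesis
      using K by (simp add: emeasure_annulus[OF m0] ennreal_mult[symmetric] ennreal_leI v_def)
  qed
  have "ennreal (real N * w) = (\<Sum>t<N. ennreal w)"
    using K by (simp add: w_def ennreal_of_nat_eq_real_of_nat ennreal_mult)
  also have "\<dots> \<le> (\<Sum>t<N. ennreal (v t) * emeasure (vilenkin_measure m) (annulus m t))"
    by (intro sum_mono contribution)
  also have "\<dots> \<le> integral\<^sup>N (vilenkin_measure m) (half_power ?G)"
    by (rule nn_integral_annuli_lower[OF m0 on_annulus])
  finally have integral: "ennreal (real N * w) \<le> integral\<^sup>N (vilenkin_measure m) (half_power ?G)" .
  have "(real N * w)\<^sup>2 = (real N)\<^sup>2 / (real B * K)"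
    using K by (simp add: w_def power_mult_distrib)
  with Lp_qnorm_half_lower[OF integral] K show ?thesis
    by (simp add: w_def K_def mult_ac)
qed

lemma growth_bound_from_norm_inequality:
  assumes m: "\<And>k. m k \<ge> 2" and mB: "\<And>k. m k \<le> B"
    and phi_ge1: "\<And>n. n \<ge> 1 \<Longrightarrow> \<phi> n \<ge> 1" and phi_mono: "mono_on {1..} \<phi>"
    and N: "N \<ge> 1"
    and bounded: "Lp_qnorm (vilenkin_measure m) (1/2) (fejer_maximal m \<phi> (test_martingale m N)) \<le>
                  ennreal c * Hp_norm m (1/2) (test_martingale m N)"
  shows "(real N)\<^sup>2 \<le> 4 * c * (real B)\<^sup>2 * \<phi> (2 * vM m N)"
proof -
  have m0: "\<And>k. m k > 0" using m by (metis less_le_trans pos2)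
  define \<Phi> where "\<Phi> = \<phi> (2 * vM m N)"
  define M where "M = real (vM m N)"
  have M: "M > 0" using vM_pos[of m N, OF m0] by (simp add: M_def)
  have \<Phi>: "\<Phi> \<ge> 1" using phi_ge1 vM_pos[of m N, OF m0] by (simp add: \<Phi>_def)
  have B: "real B \<ge> 2" using m[of 0] mB[of 0] by simp
  have H: "real (vM m (Suc N)) / (real (vM m N))\<^sup>2 \<ge> 0" by simp
  have "ennreal ((real N)\<^sup>2 / (4 * real B * M * \<Phi>)) \<le>
        ennreal c * ennreal (real (vM m (Suc N)) / (real (vM m N))\<^sup>2)"
    using fejer_maximal_test_martingale_lower[where m=m, OF m mB phi_ge1 phi_mono, of N]
      bounded Hp_norm_test_martingale(1)[where m=m, OF m, of N]
    unfolding M_def \<Phi>_def by (meson dual_order.trans mult_left_mono zero_le)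
  also have "\<dots> = ennreal (c * (real (vM m (Suc N)) / (real (vM m N))\<^sup>2))"
    using H by (rule ennreal_mult''[symmetric])
  finally have le: "ennreal ((real N)\<^sup>2 / (4 * real B * M * \<Phi>)) \<le>
                    ennreal (c * (real (vM m (Suc N)) / M\<^sup>2))"
    by (simp add: M_def)
  have pos: "(real N)\<^sup>2 / (4 * real B * M * \<Phi>) > 0" using N M \<Phi> B by simp
  have X_le: "(real N)\<^sup>2 / (4 * real B * M * \<Phi>) \<le> c * (real (vM m (Suc N)) / M\<^sup>2)"
    using le pos unfolding ennreal_le_iff2 by linarith
  have c: "c > 0"
  proof (rule ccontr)
    assume "\<not> c > 0"
    then have "c * (real (vM m (Suc N)) / M\<^sup>2) \<le> 0" by (intro mult_nonpos_nonneg) auto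
    with X_le pos show False by linarith
  qed
  have "real (vM m (Suc N)) \<le> real B * M"
    using mB[of N] by (simp add: M_def vM_Suc flip: of_nat_mult of_nat_le_iff)
  then have "real (vM m (Suc N)) / M\<^sup>2 \<le> real B / M"
    using M by (simp add: field_simps power2_eq_square)
  with X_le c have "(real N)\<^sup>2 / (4 * real B * M * \<Phi>) \<le> c * (real B / M)"
    by (meson mult_left_mono less_imp_le order_trans)
  then have "(real N)\<^sup>2 \<le> c * (real B / M) * (4 * real B * M * \<Phi>)"
    using M B \<Phi> by (simp add: pos_divide_le_eq)
  also have "\<dots> = 4 * c * (real B)\<^sup>2 * \<Phi>"
    using M by (simp add: power2_eq_square)
  finally show ?thesis unfolding \<Phi>_def .
qed

lemma vM_block:
  assumes m: "\<And>k. m k \<ge> 2" and n: "2 * m 0 \<le> n"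
  obtains N where "N \<ge> 1" "2 * vM m N \<le> n" "n < 2 * vM m (Suc N)"
proof -
  have ex: "\<exists>k. n < 2 * vM m (Suc k)"
    using vM_gt[of m "Suc n", OF m] by (intro exI[of _ n]) simp
  define N where "N = (LEAST k. n < 2 * vM m (Suc k))"
  have upper: "n < 2 * vM m (Suc N)" unfolding N_def by (rule LeastI_ex[OF ex])
  have "N \<noteq> 0" using upper n by (cases N) (auto simp: vM_Suc)
  moreover have "\<not> n < 2 * vM m (Suc (N - 1))"
    using \<open>N \<noteq> 0\<close> unfolding N_def by (intro not_less_Least) (auto simp: N_def)
  ultimately show ?thesis using upper by (intro that[of N]) auto
qed

lemma log_block_bound:
  fixes b :: real
  assumes mB: "\<And>k. m k \<le> B" and b: "b > 1" and B: "B \<ge> 1"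
    and N: "N \<ge> 1" and n: "n < 2 * vM m (Suc N)"
  shows "(log b (real n + 1))\<^sup>2 \<le> 4 * (real N)\<^sup>2 * (log b (2 * real B))\<^sup>2"
proof -
  define C where "C = log b (2 * real B)"
  have C: "C > 0" unfolding C_def using b B by simp
  have "real n + 1 \<le> 2 * real (vM m (Suc N))" using n by linarith
  also have "\<dots> \<le> 2 * real B ^ Suc N"
  proof -
    have "real (vM m (Suc N)) \<le> real (B ^ Suc N)"
      by (simp only: of_nat_le_iff) (rule vM_le_pow[of m B, OF mB])
    then show ?thesis by simp
  qed
  also have "\<dots> \<le> (2 * real B) ^ Suc N"
    using B by (simp add: power_mult_distrib)
  finally have "log b (real n + 1) \<le> log b ((2 * real B) ^ Suc N)"
    using b by (intro log_mono) auto
  also have "\<dots> = real (Suc N) * C" unfolding C_def using B by (intro log_nat_power) simp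
  also have "\<dots> \<le> 2 * real N * C" using N C by (intro mult_right_mono) auto
  finally have "(log b (real n + 1))\<^sup>2 \<le> (2 * real N * C)\<^sup>2"
    using b by (intro power_mono) auto
  then show ?thesis by (simp add: C_def power_mult_distrib)
qed

text \<open>Since (log_b(n+1))^2/\<phi>(n) is unbounded, for every K there is N \<ge> 1 with
  K \<phi>(2 M_N) < N^2: choose n with (log_b(n+1))^2 > 4 log_b(2B)^2 K \<phi>(n) and its block N.\<close>
lemma limsup_gives_large_N:
  fixes b K :: real
  assumes m: "\<And>k. m k \<ge> 2" and mB: "\<And>k. m k \<le> B" and b: "b > 1"
    and phi_ge1: "\<And>n. n \<ge> 1 \<Longrightarrow> \<phi> n \<ge> 1" and phi_mono: "mono_on {1..} \<phi>"
    and phi_limsup: "limsup (\<lambda>n. ereal ((log b (real n + 1))\<^sup>2 / \<phi> n)) = \<infinity>"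
    and K: "K \<ge> 0"
  obtains N where "N \<ge> 1" "K * \<phi> (2 * vM m N) < (real N)\<^sup>2"
proof -
  have m0: "\<And>k. m k > 0" using m by (metis less_le_trans pos2)
  have B: "B \<ge> 2" using m[of 0] mB[of 0] by simp
  define C where "C = (log b (2 * real B))\<^sup>2"
  have "log b (2 * real B) > 0" using b B by simp
  then have C: "C > 0" unfolding C_def by simp
  let ?u = "\<lambda>n. ereal ((log b (real n + 1))\<^sup>2 / \<phi> n)"
  have "\<infinity> \<le> (SUP k\<in>{2 * m 0..}. ?u k)"
    using phi_limsup INF_lower[of "2 * m 0" UNIV "\<lambda>k. SUP j\<in>{k..}. ?u j"]
    unfolding limsup_INF_SUP by simp
  then have "ereal (4 * C * K) < (SUP k\<in>{2 * m 0..}. ?u k)" by (simp add: top_unique)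
  then obtain n where n: "2 * m 0 \<le> n" and large: "ereal (4 * C * K) < ?u n"
    by (auto simp: less_SUP_iff)
  obtain N where N: "N \<ge> 1" "2 * vM m N \<le> n" "n < 2 * vM m (Suc N)"
    using vM_block[where m=m, OF m n] .
  have phi: "1 \<le> \<phi> (2 * vM m N)" "\<phi> (2 * vM m N) \<le> \<phi> n"
    using N phi_ge1 vM_pos[of m N, OF m0] by (auto intro!: mono_onD[OF phi_mono])
  have "4 * C * K * \<phi> n < (log b (real n + 1))\<^sup>2"
    using large phi by (simp add: field_simps)
  also have "\<dots> \<le> 4 * C * (real N)\<^sup>2"
    using log_block_bound[OF mB b _ N(1) N(3)] B by (simp add: C_def mult_ac)
  finally have "K * \<phi> n < (real N)\<^sup>2" using C by simp
  moreover have "K * \<phi> (2 * vM m N) \<le> K * \<phi> n" using K phi by (intro mult_left_mono)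
  ultimately show ?thesis using that N by simp
qed

theorem corollary1:
  fixes m :: "nat \<Rightarrow> nat" and \<phi> :: "nat \<Rightarrow> real" and b :: real
  assumes m_ge2: "\<And>k. m k \<ge> 2"
    and m_bdd: "\<exists>B. \<forall>k. m k \<le> B"
    and log_base: "b > 1"
    and phi_ge1: "\<And>n. n \<ge> 1 \<Longrightarrow> \<phi> n \<ge> 1"
    and phi_mono: "mono_on {1..} \<phi>"
    and phi_limsup: "limsup (\<lambda>n. ereal ((log b (real n + 1))\<^sup>2 / \<phi> n)) = \<infinity>"
  shows "\<not> (\<exists>c::real. \<forall>f. vmartingale m f \<and> Hp_norm m (1/2) f < \<top> \<longrightarrow>
            Lp_qnorm (vilenkin_measure m) (1/2)
               (\<lambda>x. SUP n\<in>{1..}. ennreal (cmod (vfejer m f n x) / \<phi> n))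
            \<le> ennreal c * Hp_norm m (1/2) f)"
proof
  assume "\<exists>c::real. \<forall>f. vmartingale m f \<and> Hp_norm m (1/2) f < \<top> \<longrightarrow>
            Lp_qnorm (vilenkin_measure m) (1/2)
               (\<lambda>x. SUP n\<in>{1..}. ennreal (cmod (vfejer m f n x) / \<phi> n))
            \<le> ennreal c * Hp_norm m (1/2) f"
  then obtain c :: real where bounded: "\<And>f. vmartingale m f \<Longrightarrow> Hp_norm m (1/2) f < \<top> \<Longrightarrow>
      Lp_qnorm (vilenkin_measure m) (1/2) (fejer_maximal m \<phi> f) \<le> ennreal c * Hp_norm m (1/2) f"
    unfolding fejer_maximal_def by blast
  obtain B where mB: "\<And>k. m k \<le> B" using m_bdd by blast
  have m0: "\<And>k. m k > 0" using m_ge2 by (metis less_le_trans pos2)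
  obtain N where N: "N \<ge> 1" and large: "4 * \<bar>c\<bar> * (real B)\<^sup>2 * \<phi> (2 * vM m N) < (real N)\<^sup>2"
    using limsup_gives_large_N[where m=m, OF m_ge2 mB log_base phi_ge1 phi_mono phi_limsup,
        of "4 * \<bar>c\<bar> * (real B)\<^sup>2"] by (auto simp: mult_ac)
  have "(real N)\<^sup>2 \<le> 4 * c * (real B)\<^sup>2 * \<phi> (2 * vM m N)"
    using growth_bound_from_norm_inequality[where m=m, OF m_ge2 mB phi_ge1 phi_mono N
        bounded[OF test_martingale_vmartingale[OF m0] Hp_norm_test_martingale(2)[OF m_ge2]]] .
  moreover have "4 * c * (real B)\<^sup>2 * \<phi> (2 * vM m N) \<le> 4 * \<bar>c\<bar> * (real B)\<^sup>2 * \<phi> (2 * vM m N)"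
    using phi_ge1[of "2 * vM m N"] N vM_pos[of m N, OF m0] by (intro mult_right_mono) auto
  ultimately show False using large by linarith
qed

end
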